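(* Let $\mu>2$, let $\Omega_j$, $j\in\mathbf N$, be disjoint open subsets of $\mathbb R^d\setminus B_\mu(0)$ (where $B_\mu(0)$ is the open ball of radius $\mu$ centred at the origin), let $\chi_j$ be the characteristic function of $\Omega_j$, and let $b_j\in L^1_{loc}(\mathbb R^d)$, $j\in\mathbf N$, satisfy $\sup_{j\in\mathbf N}\|b_j\|_{L^\infty(\Omega_j)}<\infty$. (i) Assume $p\in(1,\infty)$ and $\rho>1$, and let $g$ be given by $$\widehat g(\xi)=|\xi|^{-d}(\log|\xi|)^{-\rho/p}\sum_{j=1}^\infty \chi_j(\xi)b_j(\xi).$$ Then $g\in\mathscr F L^p_s(\mathbb R^d)$ with $s=d(p-1)/p$. (ii) Assume $p=1$ and $\rho\ge 0$, and let $g$ be given by $\widehat g(\xi)=|\xi|^{-d}(\log|\xi|)^{-\rho}\sum_{j=1}^\infty \chi_j(\xi)b_j(\xi)$. Then $g\in\mathscr F L^1_s(\mathbb R^d)$ for every $s<0$. (iii) Assume $p=\infty$ and $\rho\ge 0$, and let $g$ be given by $\widehat g(\xi)=|\xi|^{-d}(\log|\xi|)^{-\rho}\sum_{j=1}^\infty \chi_j(\xi)b_j(\xi)$ (i.e. the exponent $\rho/p$ replaced by $\rho$). Then $g\in\mathscr F L^\infty_s(\mathbb R^d)$ with $s=d$.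
   Context: Here $\widehat f(\xi)=\int_{\mathbb R^d} e^{-ix\cdot\xi}f(x)\,dx$ denotes the Fourier transform, $\langle\xi\rangle=(1+|\xi|^2)^{1/2}$, and for $p\in[1,\infty]$, $s\in\mathbb R$, the weighted Fourier Lebesgue space $\mathscr F L^p_s(\mathbb R^d)$ consists of all tempered distributions $f$ such that $\|f\|_{\mathscr F L^p_s}=\|\widehat f\,\langle\cdot\rangle^s\|_{L^p(\mathbb R^d)}$ is finite. *)

theory Defs
  imports "HOL-Analysis.Analysis"
begin

definition japanese :: "'a::euclidean_space \<Rightarrow> real" where
  "japanese \<xi> = sqrt (1 + (norm \<xi>)\<^sup>2)"

text \<open>Membership in the weighted Fourier Lebesgue space FL^p_s of the (tempered)
  distribution whose Fourier transform is the function F, i.e.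
  the L^p norm of F times <xi>^s is finite (p in [1,infinity]).\<close>
definition fourier_lebesgue_hat :: "ennreal \<Rightarrow> real \<Rightarrow> ('a::euclidean_space \<Rightarrow> complex) \<Rightarrow> bool" where
  "fourier_lebesgue_hat p s F \<longleftrightarrow>
     F \<in> borel_measurable lebesgue \<and>
     (if p = \<infinity> then (\<exists>C. AE \<xi> in lebesgue. cmod (F \<xi>) * japanese \<xi> powr s \<le> C)
      else (\<integral>\<^sup>+ \<xi>. ennreal ((cmod (F \<xi>) * japanese \<xi> powr s) powr (enn2real p)) \<partial>lebesgue) < \<infinity>)"

definition ghat :: "(nat \<Rightarrow> 'a::euclidean_space set) \<Rightarrow> (nat \<Rightarrow> 'a \<Rightarrow> complex) \<Rightarrow> real \<Rightarrow> 'a \<Rightarrow> complex" where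
  "ghat \<Omega> b e \<xi> =
     complex_of_real (norm \<xi> powr (- real DIM('a)) * ln (norm \<xi>) powr (- e)) *
     (\<Sum>j. indicator (\<Omega> j) \<xi> * b j \<xi>)"

end

theory Submission
  imports Defs
begin

text \<open>On the dyadic shell \<open>2^k \<le> |\<xi>| < 2^(k+1)\<close>, which has volume of order \<open>2^(kd)\<close>, the
  weighted symbol is at most \<open>k^(-\<rho>) 2^(-kd)\<close> in case (i) and \<open>2^(ks) 2^(-kd)\<close> in case (ii)
  (the factor \<open>|\<xi>|^(-d)\<close> exactly compensates the volume), so the \<open>L^p\<close>-integral is dominated
  by the convergent series \<open>\<Sum> k^(-\<rho>)\<close> resp. \<open>\<Sum> 2^(ks)\<close>. In case (iii) the weight
  \<open>\<langle>\<xi>\<rangle>^d \<le> 2^(d/2) |\<xi>|^d\<close> cancels \<open>|\<xi>|^(-d)\<close> outright, and \<open>log |\<xi>| \<ge> log 2\<close>.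
  Since the \<open>\<Omega>_j\<close> are disjoint, the series defining \<open>\<widehat>g\<close> has at most one nonzero term,
  which is bounded uniformly in \<open>j\<close>.\<close>

lemma borel_measurable_if_integrable_on_compacts:
  fixes f :: "'a::euclidean_space \<Rightarrow> 'b::{banach, second_countable_topology}"
  assumes "\<And>K. compact K \<Longrightarrow> set_integrable lebesgue K f"
  shows "f \<in> borel_measurable lebesgue"
proof (rule borel_measurable_LIMSEQ_metric)
  fix n :: nat
  have "set_integrable lebesgue (cball 0 (real n)) f" using assms by auto
  then show "(\<lambda>x. indicator (cball 0 (real n)) x *\<^sub>R f x) \<in> borel_measurable lebesgue"
    unfolding set_integrable_def by (rule borel_measurable_integrable)
next
  fix x :: 'a
  obtain N :: nat where "norm x \<le> real N" using real_arch_simple by blast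
  then have "\<forall>n\<ge>N. indicator (cball 0 (real n)) x *\<^sub>R f x = f x" by auto
  then show "(\<lambda>n. indicator (cball 0 (real n)) x *\<^sub>R f x) \<longlonglongrightarrow> f x"
    by (intro tendsto_eventually) (auto simp: eventually_sequentially)
qed

lemma suminf_indicator_disjoint_family:
  fixes b :: "nat \<Rightarrow> 'a \<Rightarrow> 'b::real_normed_algebra_1"
  assumes "disjoint_family \<Omega>" and "x \<in> \<Omega> j"
  shows "(\<Sum>i. indicator (\<Omega> i) x * b i x) = b j x"
proof -
  have "(\<lambda>i. indicator (\<Omega> i) x * b i x) = (\<lambda>i. if i = j then b j x else 0)"
    using assms by (auto simp: disjoint_family_on_def indicator_def fun_eq_iff)
  then show ?thesis using sums_unique[OF sums_single[of j "\<lambda>_. b j x"]] by simp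
qed

lemma japanese_pos: "0 < japanese \<xi>"
  unfolding japanese_def by (simp add: add_pos_nonneg)

lemma norm_le_japanese: "norm \<xi> \<le> japanese \<xi>"
  unfolding japanese_def by (simp add: real_le_rsqrt)

lemma japanese_le_sqrt2_norm:
  assumes "1 \<le> norm \<xi>"
  shows "japanese \<xi> \<le> sqrt 2 * norm \<xi>"
proof -
  have "1 \<le> (norm \<xi>)\<^sup>2" using assms by (simp add: one_le_power)
  then have "sqrt (1 + (norm \<xi>)\<^sup>2) \<le> sqrt (2 * (norm \<xi>)\<^sup>2)" by (intro real_sqrt_le_mono) simp
  then show ?thesis unfolding japanese_def by (simp add: real_sqrt_mult)
qed

lemma dyadic_index:
  fixes x :: real
  assumes "1 \<le> x"
  shows "2 ^ nat \<lfloor>log 2 x\<rfloor> \<le> x \<and> x < 2 ^ Suc (nat \<lfloor>log 2 x\<rfloor>)"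
  using assms
  by (smt (verit, del_insts) Suc_n_not_le_n le_log_of_power le_nat_floor power_of_nat_log_le)

lemma powr_le_dyadic:
  fixes x s :: real
  assumes "s \<le> 0" and "2 ^ k \<le> x"
  shows "x powr s \<le> (2 powr s) ^ k"
proof -
  have "x powr s \<le> (2 ^ k) powr s" using assms by (intro powr_mono2') auto
  also have "\<dots> = (2 powr s) ^ k" by (simp add: powr_realpow[symmetric] powr_powr mult.commute)
  finally show ?thesis .
qed

lemma two_powr_neg_power: "(2 powr (- real d)) ^ k = 1 / 2 ^ (k * d)"
  by (simp add: powr_minus powr_realpow power_mult_distrib power_inverse divide_inverse
      flip: power_mult)

lemma ln_powr_le_dyadic:
  fixes x \<rho> :: real
  assumes "0 \<le> \<rho>" and "1 \<le> k" and "2 ^ k \<le> x"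
  shows "ln x powr (- \<rho>) \<le> (real k * ln 2) powr (- \<rho>)"
proof -
  have "(0::real) < 2 ^ k" by simp
  with assms(3) have "0 < x" by linarith
  have "real k * ln 2 = ln (2 ^ k)" by (simp add: ln_realpow)
  also have "\<dots> \<le> ln x" using \<open>0 < x\<close> assms(3) by simp
  finally show ?thesis using assms(1,2) by (intro powr_mono2') auto
qed

lemma ln_powr_le_ln2_powr:
  fixes x \<rho> :: real
  assumes "0 \<le> \<rho>" and "2 \<le> x"
  shows "ln x powr (- \<rho>) \<le> ln 2 powr (- \<rho>)"
  using assms by (intro powr_mono2') auto

lemma nn_integral_finite_by_dyadic_shells:
  fixes f :: "'a::euclidean_space \<Rightarrow> real" and a :: "nat \<Rightarrow> real"
  assumes a_nonneg: "\<And>k. 0 \<le> a k" and a_summable: "summable a"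
    and near_origin: "\<And>\<xi>. norm \<xi> < 1 \<Longrightarrow> f \<xi> \<le> 0"
    and on_shells: "\<And>k. AE \<xi> in lebesgue. 2 ^ k \<le> norm \<xi> \<and> norm \<xi> < 2 ^ Suc k \<longrightarrow>
                               f \<xi> \<le> a k / 2 ^ (k * DIM('a))"
  shows "(\<integral>\<^sup>+\<xi>. ennreal (f \<xi>) \<partial>lebesgue) < \<infinity>"
proof -
  define d where "d = DIM('a)"
  define S where "S k = ball (0::'a) (2 ^ Suc k) - ball 0 (2 ^ k)" for k
  define c where "c k = a k / 2 ^ (k * d)" for k
  define V where "V = unit_ball_vol (real d)"
  have S_sets [measurable]: "S k \<in> sets lebesgue" for k unfolding S_def by auto
  have "AE \<xi> in lebesgue. \<forall>k. 2 ^ k \<le> norm \<xi> \<and> norm \<xi> < 2 ^ Suc k \<longrightarrow> f \<xi> \<le> c k"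
    using on_shells by (simp add: AE_all_countable c_def d_def)
  then have "AE \<xi> in lebesgue. ennreal (f \<xi>) \<le> (\<Sum>k. ennreal (c k) * indicator (S k) \<xi>)"
  proof (rule eventually_mono)
    fix \<xi> :: 'a
    assume shells: "\<forall>k. 2 ^ k \<le> norm \<xi> \<and> norm \<xi> < 2 ^ Suc k \<longrightarrow> f \<xi> \<le> c k"
    show "ennreal (f \<xi>) \<le> (\<Sum>k. ennreal (c k) * indicator (S k) \<xi>)"
    proof (cases "norm \<xi> < 1")
      case True
      then show ?thesis using near_origin by (simp add: ennreal_neg)
    next
      case False
      define k where "k = nat \<lfloor>log 2 (norm \<xi>)\<rfloor>"
      have k: "2 ^ k \<le> norm \<xi> \<and> norm \<xi> < 2 ^ Suc k"
        using dyadic_index[of "norm \<xi>"] False by (simp add: k_def)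
      then have "ennreal (f \<xi>) \<le> ennreal (c k) * indicator (S k) \<xi>"
        using shells by (auto simp: S_def intro!: ennreal_leI)
      also have "\<dots> \<le> (\<Sum>k. ennreal (c k) * indicator (S k) \<xi>)"
        using ennreal_suminf_lessD leI by blast
      finally show ?thesis .
    qed
  qed
  then have "(\<integral>\<^sup>+\<xi>. ennreal (f \<xi>) \<partial>lebesgue)
      \<le> (\<integral>\<^sup>+\<xi>. (\<Sum>k. ennreal (c k) * indicator (S k) \<xi>) \<partial>lebesgue)"
    by (rule nn_integral_mono_AE)
  also have "\<dots> = (\<Sum>k. ennreal (c k) * emeasure lebesgue (S k))"
    by (subst nn_integral_suminf) (auto simp: nn_integral_cmult_indicator)
  also have "\<dots> \<le> (\<Sum>k. ennreal (a k * V * 2 ^ d))"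
  proof (rule suminf_le)
    fix k
    have "emeasure lebesgue (S k) \<le> emeasure lebesgue (ball (0::'a) (2 ^ Suc k))"
      by (rule emeasure_mono) (auto simp: S_def)
    also have "\<dots> = ennreal (V * (2 ^ Suc k) ^ d)"
      by (simp add: emeasure_ball V_def d_def)
    finally have "ennreal (c k) * emeasure lebesgue (S k) \<le> ennreal (c k) * ennreal (V * (2 ^ Suc k) ^ d)"
      by (rule mult_left_mono) simp
    also have "\<dots> = ennreal (c k * (V * (2 ^ Suc k) ^ d))"
      using a_nonneg[of k] by (intro ennreal_mult[symmetric]) (auto simp: c_def V_def)
    also have "c k * (V * (2 ^ Suc k) ^ d) = a k * V * 2 ^ d"
      by (simp add: c_def power_mult_distrib mult.commute power_add flip: power_mult)
    finally show "ennreal (c k) * emeasure lebesgue (S k) \<le> ennreal (a k * V * 2 ^ d)" .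
  qed auto
  also have "\<dots> < \<infinity>"
    using a_nonneg a_summable
    by (simp add: ennreal_suminf_neq_top summable_mult2 V_def less_top)
  finally show ?thesis .
qed

lemma log_decay_weighted_powr_le:
  fixes \<xi> :: "'a::euclidean_space"
  defines "d \<equiv> real DIM('a)"
  assumes p: "1 < p" and C: "0 \<le> C" and \<xi>: "2 \<le> norm \<xi>" and y: "0 \<le> y"
    and decay: "y \<le> C * (norm \<xi> powr (- d) * ln (norm \<xi>) powr (- (\<rho> / p)))"
  shows "(y * japanese \<xi> powr (d * (p - 1) / p)) powr p
           \<le> (C * sqrt 2 powr (d * (p - 1) / p)) powr p * (norm \<xi> powr (- d) * ln (norm \<xi>) powr (- \<rho>))"
proof -
  define N L t where "N = norm \<xi>" and "L = ln N" and "t = d * (p - 1) / p"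
  have "0 < L" using \<xi> by (simp add: L_def N_def ln_gt_zero)
  have "0 \<le> t" using p by (simp add: t_def d_def)
  have "japanese \<xi> powr t \<le> (sqrt 2 * N) powr t"
    using japanese_le_sqrt2_norm[of \<xi>] \<xi> japanese_pos[of \<xi>] \<open>0 \<le> t\<close>
    by (intro powr_mono2) (auto simp: N_def)
  then have "y * japanese \<xi> powr t \<le> C * (N powr (- d) * L powr (- (\<rho> / p))) * (sqrt 2 * N) powr t"
    using decay y by (intro mult_mono) (auto simp: N_def L_def)
  also have "\<dots> = C * sqrt 2 powr t * ((N powr (- d) * N powr t) * L powr (- (\<rho> / p)))"
    using \<xi> by (simp add: powr_mult N_def mult_ac)
  also have "N powr (- d) * N powr t = N powr (- d / p)"
    using p \<xi> by (simp add: powr_add[symmetric] t_def N_def field_simps)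
  finally have "(y * japanese \<xi> powr t) powr p
      \<le> (C * sqrt 2 powr t * (N powr (- d / p) * L powr (- (\<rho> / p)))) powr p"
    using y japanese_pos[of \<xi>] p by (intro powr_mono2) auto
  also have "\<dots> = (C * sqrt 2 powr t) powr p * (N powr (- d) * L powr (- \<rho>))"
    using p \<xi> \<open>0 < L\<close> C by (simp add: powr_mult powr_powr N_def)
  finally show ?thesis by (simp add: t_def N_def L_def)
qed

lemma fourier_lebesgue_hat_p_log_decay:
  fixes F :: "'a::euclidean_space \<Rightarrow> complex"
  defines "d \<equiv> real DIM('a)"
  assumes p: "1 < p" and \<rho>: "1 < \<rho>" and C: "0 \<le> C"
    and meas: "F \<in> borel_measurable lebesgue"
    and vanish: "\<And>\<xi>. norm \<xi> < 2 \<Longrightarrow> F \<xi> = 0"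
    and decay: "AE \<xi> in lebesgue. cmod (F \<xi>) \<le> C * (norm \<xi> powr (- d) * ln (norm \<xi>) powr (- (\<rho> / p)))"
  shows "fourier_lebesgue_hat (ennreal p) (d * (p - 1) / p) F"
proof -
  define f where "f \<xi> = (cmod (F \<xi>) * japanese \<xi> powr (d * (p - 1) / p)) powr p" for \<xi>
  define K where "K = (C * sqrt 2 powr (d * (p - 1) / p)) powr p"
  define a where "a k = K * ((real k * ln 2) powr (- \<rho>))" for k
  have on_shell: "f \<xi> \<le> a k / 2 ^ (k * DIM('a))"
    if decay_\<xi>: "cmod (F \<xi>) \<le> C * (norm \<xi> powr (- d) * ln (norm \<xi>) powr (- (\<rho> / p)))"
      and shell: "2 ^ k \<le> norm \<xi>" "norm \<xi> < 2 ^ Suc k" for \<xi> k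
  proof (cases "norm \<xi> < 2")
    case True
    then show ?thesis using vanish by (simp add: f_def a_def K_def)
  next
    case False
    then have "1 \<le> k" using shell(2) by (cases k) auto
    have "f \<xi> \<le> K * (norm \<xi> powr (- d) * ln (norm \<xi>) powr (- \<rho>))"
      unfolding f_def K_def d_def using False p C decay_\<xi>
      by (intro log_decay_weighted_powr_le) (auto simp: d_def)
    also have "\<dots> \<le> K * ((2 powr (- d)) ^ k * (real k * ln 2) powr (- \<rho>))"
      using shell \<rho> \<open>1 \<le> k\<close> by (intro mult_left_mono mult_mono powr_le_dyadic ln_powr_le_dyadic)
        (auto simp: K_def d_def)
    finally show ?thesis by (simp add: two_powr_neg_power a_def d_def)
  qed
  have "a = (\<lambda>k. K * ln 2 powr (- \<rho>) * real k powr (- \<rho>))"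
    by (simp add: fun_eq_iff a_def powr_mult)
  then have "summable a"
    using \<rho> by (simp add: summable_real_powr_iff summable_mult)
  then have "(\<integral>\<^sup>+\<xi>. ennreal (f \<xi>) \<partial>lebesgue) < \<infinity>"
    using on_shell vanish
    by (intro nn_integral_finite_by_dyadic_shells eventually_mono[OF decay])
      (auto simp: a_def K_def f_def)
  then show ?thesis using p meas by (simp add: fourier_lebesgue_hat_def f_def)
qed

lemma fourier_lebesgue_hat_1_log_decay:
  fixes F :: "'a::euclidean_space \<Rightarrow> complex"
  defines "d \<equiv> real DIM('a)"
  assumes s: "s < 0" and \<rho>: "0 \<le> \<rho>" and C: "0 \<le> C"
    and meas: "F \<in> borel_measurable lebesgue"
    and vanish: "\<And>\<xi>. norm \<xi> < 2 \<Longrightarrow> F \<xi> = 0"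
    and decay: "AE \<xi> in lebesgue. cmod (F \<xi>) \<le> C * (norm \<xi> powr (- d) * ln (norm \<xi>) powr (- \<rho>))"
  shows "fourier_lebesgue_hat 1 s F"
proof -
  define f where "f \<xi> = cmod (F \<xi>) * japanese \<xi> powr s" for \<xi>
  define a where "a k = C * ln 2 powr (- \<rho>) * (2 powr s) ^ k" for k
  have on_shell: "f \<xi> \<le> a k / 2 ^ (k * DIM('a))"
    if decay_\<xi>: "cmod (F \<xi>) \<le> C * (norm \<xi> powr (- d) * ln (norm \<xi>) powr (- \<rho>))"
      and shell: "2 ^ k \<le> norm \<xi>" for \<xi> k
  proof (cases "norm \<xi> < 2")
    case True
    then show ?thesis using vanish C by (simp add: f_def a_def)
  next
    case False
    have "japanese \<xi> powr s \<le> norm \<xi> powr s"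
      using norm_le_japanese[of \<xi>] False s by (intro powr_mono2') auto
    then have "f \<xi> \<le> C * (norm \<xi> powr (- d) * ln (norm \<xi>) powr (- \<rho>)) * norm \<xi> powr s"
      unfolding f_def using decay_\<xi> C by (intro mult_mono) auto
    also have "\<dots> \<le> C * ((2 powr (- d)) ^ k * ln 2 powr (- \<rho>)) * (2 powr s) ^ k"
      using shell s \<rho> C False
      by (intro mult_mono mult_left_mono powr_le_dyadic ln_powr_le_ln2_powr) (auto simp: d_def)
    finally show ?thesis by (simp add: two_powr_neg_power a_def d_def)
  qed
  have "norm (2 powr s) < (1::real)" using s by (simp add: powr_less_one)
  then have "summable a" unfolding a_def by (intro summable_mult summable_geometric)
  then have "(\<integral>\<^sup>+\<xi>. ennreal (f \<xi>) \<partial>lebesgue) < \<infinity>"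
    using on_shell vanish C
    by (intro nn_integral_finite_by_dyadic_shells eventually_mono[OF decay])
      (auto simp: a_def f_def)
  then show ?thesis using meas by (simp add: fourier_lebesgue_hat_def f_def)
qed

lemma fourier_lebesgue_hat_infinity_log_decay:
  fixes F :: "'a::euclidean_space \<Rightarrow> complex"
  defines "d \<equiv> real DIM('a)"
  assumes \<rho>: "0 \<le> \<rho>" and C: "0 \<le> C"
    and meas: "F \<in> borel_measurable lebesgue"
    and vanish: "\<And>\<xi>. norm \<xi> < 2 \<Longrightarrow> F \<xi> = 0"
    and decay: "AE \<xi> in lebesgue. cmod (F \<xi>) \<le> C * (norm \<xi> powr (- d) * ln (norm \<xi>) powr (- \<rho>))"
  shows "fourier_lebesgue_hat \<infinity> d F"
proof -
  have "cmod (F \<xi>) * japanese \<xi> powr d \<le> C * sqrt 2 powr d * ln 2 powr (- \<rho>)"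
    if decay_\<xi>: "cmod (F \<xi>) \<le> C * (norm \<xi> powr (- d) * ln (norm \<xi>) powr (- \<rho>))" for \<xi>
  proof (cases "norm \<xi> < 2")
    case True
    then show ?thesis using vanish C by simp
  next
    case False
    have "japanese \<xi> powr d \<le> (sqrt 2 * norm \<xi>) powr d"
      using japanese_le_sqrt2_norm[of \<xi>] False japanese_pos[of \<xi>]
      by (intro powr_mono2) (auto simp: d_def)
    then have "cmod (F \<xi>) * japanese \<xi> powr d
        \<le> C * (norm \<xi> powr (- d) * ln (norm \<xi>) powr (- \<rho>)) * (sqrt 2 * norm \<xi>) powr d"
      using decay_\<xi> C by (intro mult_mono) auto
    also have "\<dots> = C * sqrt 2 powr d * ln (norm \<xi>) powr (- \<rho>) * (norm \<xi> powr (- d) * norm \<xi> powr d)"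
      by (simp add: powr_mult mult_ac)
    also have "norm \<xi> powr (- d) * norm \<xi> powr d = 1"
      using False by (auto simp flip: powr_add)
    also have "C * sqrt 2 powr d * ln (norm \<xi>) powr (- \<rho>) * 1 \<le> C * sqrt 2 powr d * ln 2 powr (- \<rho>)"
      using \<rho> C False by (simp add: mult_left_mono ln_powr_le_ln2_powr)
    finally show ?thesis .
  qed
  then show ?thesis
    using meas by (auto simp: fourier_lebesgue_hat_def intro!: exI eventually_mono[OF decay])
qed

lemma ghat_measurable:
  assumes "\<And>j. \<Omega> j \<in> sets lebesgue" and "\<And>j. b j \<in> borel_measurable lebesgue"
  shows "ghat \<Omega> b e \<in> borel_measurable lebesgue"
proof -
  have [measurable]: "\<Omega> j \<in> sets lebesgue" "b j \<in> borel_measurable lebesgue" for j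
    using assms by auto
  have [measurable]: "(norm :: 'a::euclidean_space \<Rightarrow> real) \<in> borel_measurable lebesgue"
    by (rule measurable_completion) simp
  show ?thesis unfolding ghat_def[abs_def] by measurable
qed

lemma ghat_eq_0_inside:
  assumes "\<And>j. \<Omega> j \<subseteq> - ball 0 \<mu>" and "norm \<xi> < \<mu>"
  shows "ghat \<Omega> b e \<xi> = 0"
proof -
  have "\<xi> \<in> ball 0 \<mu>" using assms(2) by simp
  then have "\<xi> \<notin> \<Omega> j" for j using assms(1) by blast
  then show ?thesis by (simp add: ghat_def)
qed

lemma norm_ghat_le:
  fixes \<Omega> :: "nat \<Rightarrow> 'a::euclidean_space set"
  assumes "disjoint_family \<Omega>" and "0 \<le> C" and "\<And>j. \<xi> \<in> \<Omega> j \<Longrightarrow> cmod (b j \<xi>) \<le> C"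
  shows "cmod (ghat \<Omega> b e \<xi>) \<le> C * (norm \<xi> powr (- real DIM('a)) * ln (norm \<xi>) powr (- e))"
proof (cases "\<exists>j. \<xi> \<in> \<Omega> j")
  case True
  then obtain j where "\<xi> \<in> \<Omega> j" by blast
  then have "cmod (ghat \<Omega> b e \<xi>) = norm \<xi> powr (- real DIM('a)) * ln (norm \<xi>) powr (- e) * cmod (b j \<xi>)"
    using assms(1) by (simp add: ghat_def suminf_indicator_disjoint_family norm_mult)
  also have "\<dots> \<le> norm \<xi> powr (- real DIM('a)) * ln (norm \<xi>) powr (- e) * C"
    using assms(3) \<open>\<xi> \<in> \<Omega> j\<close> by (intro mult_left_mono) auto
  finally show ?thesis by (simp add: mult_ac)
next
  case False
  then show ?thesis using assms(2) by (simp add: ghat_def)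
qed

theorem lemma3p2:
  fixes \<mu> :: real
    and \<Omega> :: "nat \<Rightarrow> 'a::euclidean_space set"
    and b :: "nat \<Rightarrow> 'a \<Rightarrow> complex"
  assumes mu: "\<mu> > 2"
    and open_\<Omega>: "\<And>j. open (\<Omega> j)"
    and disj: "disjoint_family \<Omega>"
    and outside: "\<And>j. \<Omega> j \<subseteq> - ball 0 \<mu>"
    and loc_int: "\<And>j K. compact K \<Longrightarrow> set_integrable lebesgue K (b j)"
    and sup_bound: "\<exists>C. \<forall>j. AE \<xi> in lebesgue. \<xi> \<in> \<Omega> j \<longrightarrow> cmod (b j \<xi>) \<le> C"
  shows "(\<forall>p \<rho>. 1 < p \<and> \<rho> > 1 \<longrightarrow>
            fourier_lebesgue_hat (ennreal p) (real DIM('a) * (p - 1) / p) (ghat \<Omega> b (\<rho> / p)))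
       \<and> (\<forall>\<rho> s. \<rho> \<ge> 0 \<and> s < 0 \<longrightarrow> fourier_lebesgue_hat 1 s (ghat \<Omega> b \<rho>))
       \<and> (\<forall>\<rho>. \<rho> \<ge> 0 \<longrightarrow> fourier_lebesgue_hat \<infinity> (real DIM('a)) (ghat \<Omega> b \<rho>))"
proof -
  obtain C0 where "\<forall>j. AE \<xi> in lebesgue. \<xi> \<in> \<Omega> j \<longrightarrow> cmod (b j \<xi>) \<le> C0"
    using sup_bound by blast
  then have bound: "AE \<xi> in lebesgue. \<forall>j. \<xi> \<in> \<Omega> j \<longrightarrow> cmod (b j \<xi>) \<le> max C0 0"
    by (auto simp: AE_all_countable elim!: eventually_mono)
  have decay: "AE \<xi> in lebesgue. cmod (ghat \<Omega> b e \<xi>)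
                 \<le> max C0 0 * (norm \<xi> powr (- real DIM('a)) * ln (norm \<xi>) powr (- e))" for e
    using bound by (rule eventually_mono) (intro norm_ghat_le[OF disj], auto)
  have meas: "ghat \<Omega> b e \<in> borel_measurable lebesgue" for e
    using open_\<Omega> loc_int by (intro ghat_measurable borel_measurable_if_integrable_on_compacts) auto
  have vanish: "ghat \<Omega> b e \<xi> = 0" if "norm \<xi> < 2" for e \<xi>
    using outside that mu by (intro ghat_eq_0_inside[of \<Omega> \<mu>]) auto
  have "0 \<le> max C0 0" by simp
  note log_decay = \<open>0 \<le> max C0 0\<close> meas vanish decay
  show ?thesis
    by (blast intro: fourier_lebesgue_hat_p_log_decay[OF _ _ log_decay]
        fourier_lebesgue_hat_1_log_decay[OF _ _ log_decay]
        fourier_lebesgue_hat_infinity_log_decay[OF _ log_decay])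
qed

end
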